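(* Let $\mathcal H$ be a complex Hilbert space with $\dim\mathcal H\ge n$, let $c=(c_1,\dots,c_n)$ and $\|A\|_c=\sum_{j=1}^n c_js_j(A)$ for $A\in\mathcal B(\mathcal H)$. For parts (a), (b), (c), (e) assume $c$ has positive entries arranged in descending order $c_1\ge\cdots\ge c_n>0$. (a) $\|\cdot\|_c$ is submultiplicative ($\|AB\|_c\le\|A\|_c\|B\|_c$ for all $A,B$) if and only if $c_1\ge1$. (b) $\|\cdot\|_c$ is a cross norm ($\|A\|_c=s_1(A)$ for every rank one $A$) if and only if $c_1=1$. (c) Suppose $c_1\ge1$. There exist nonzero $A,B\in\mathcal B(\mathcal H)$ with $\|AB\|_c=\|A\|_c\|B\|_c$ if and only if $c_1=1$. (d) Suppose $c=(1,0,\dots,0)$. Two nonzero operators $A,B\in\mathcal B(\mathcal H)$ satisfy $\|AB\|_c=\|A\|_c\|B\|_c$ if and only if $s_1(AB)=s_1(A)s_1(B)$. (e) Suppose $n\ge2$, $c_1=1$ and $c_2>0$. Two nonzero operators $A,B\in\mathcal B(\mathcal H)$ satisfy $\|AB\|_c=\|A\|_c\|B\|_c$ if and only if $A=xy^*$ and $B=yz^*$ for some nonzero vectors $x,y,z\in\mathcal H$.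
   Context: $\mathcal B(\mathcal H)$ is the algebra of bounded linear operators on $\mathcal H$; $s_k(A)=\inf\{\|A-X\|_{\rm sp}:\operatorname{rank}X<k\}$ is the $k$th singular value, with $\|\cdot\|_{\rm sp}$ the operator norm. $xy^*$ denotes the operator $v\mapsto\langle v,y\rangle x$. *)

theory Defs
  imports "HOL-Analysis.Analysis"
begin

text \<open>A complex Hilbert space is modelled on a type 'a with an explicit complex scalar
multiplication sc and inner product ip (linear in the first argument, conjugate-linear
in the second), complete for the induced norm.\<close>

definition hnorm :: "('a \<Rightarrow> 'a \<Rightarrow> complex) \<Rightarrow> 'a \<Rightarrow> real" where
  "hnorm ip x = sqrt (Re (ip x x))"

definition chilbert :: "(complex \<Rightarrow> 'a::ab_group_add \<Rightarrow> 'a) \<Rightarrow> ('a \<Rightarrow> 'a \<Rightarrow> complex) \<Rightarrow> bool" where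
  "chilbert sc ip \<longleftrightarrow>
     vector_space sc \<and>
     (\<forall>x y. ip y x = cnj (ip x y)) \<and>
     (\<forall>x y z. ip (x + y) z = ip x z + ip y z) \<and>
     (\<forall>a x y. ip (sc a x) y = a * ip x y) \<and>
     (\<forall>x. 0 \<le> Re (ip x x)) \<and>
     (\<forall>x. ip x x = 0 \<longrightarrow> x = 0) \<and>
     (\<forall>f :: nat \<Rightarrow> 'a.
        (\<forall>e>0. \<exists>N. \<forall>m\<ge>N. \<forall>k\<ge>N. hnorm ip (f m - f k) < e) \<longrightarrow>
        (\<exists>l. (\<lambda>m. hnorm ip (f m - l)) \<longlonglongrightarrow> 0))"

definition bop :: "(complex \<Rightarrow> 'a::ab_group_add \<Rightarrow> 'a) \<Rightarrow> ('a \<Rightarrow> 'a \<Rightarrow> complex) \<Rightarrow> ('a \<Rightarrow> 'a) \<Rightarrow> bool" where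
  "bop sc ip T \<longleftrightarrow>
     (\<forall>x y. T (x + y) = T x + T y) \<and> (\<forall>a x. T (sc a x) = sc a (T x)) \<and>
     (\<exists>K. \<forall>x. hnorm ip (T x) \<le> K * hnorm ip x)"

definition opnorm :: "('a \<Rightarrow> 'a \<Rightarrow> complex) \<Rightarrow> ('a \<Rightarrow> 'a) \<Rightarrow> real" where
  "opnorm ip T = Sup {hnorm ip (T x) | x. hnorm ip x \<le> 1}"

definition rank_lt :: "(complex \<Rightarrow> 'a::ab_group_add \<Rightarrow> 'a) \<Rightarrow> ('a \<Rightarrow> 'a) \<Rightarrow> nat \<Rightarrow> bool" where
  "rank_lt sc X k \<longleftrightarrow> (\<exists>B. finite B \<and> card B < k \<and> range X \<subseteq> module.span sc B)"

text \<open>k-th singular value (k \<ge> 1).\<close>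
definition sval :: "(complex \<Rightarrow> 'a::ab_group_add \<Rightarrow> 'a) \<Rightarrow> ('a \<Rightarrow> 'a \<Rightarrow> complex) \<Rightarrow> nat \<Rightarrow> ('a \<Rightarrow> 'a) \<Rightarrow> real" where
  "sval sc ip k A = Inf {opnorm ip (\<lambda>v. A v - X v) | X. bop sc ip X \<and> rank_lt sc X k}"

definition cnorm :: "(complex \<Rightarrow> 'a::ab_group_add \<Rightarrow> 'a) \<Rightarrow> ('a \<Rightarrow> 'a \<Rightarrow> complex) \<Rightarrow> (nat \<Rightarrow> real) \<Rightarrow> nat \<Rightarrow> ('a \<Rightarrow> 'a) \<Rightarrow> real" where
  "cnorm sc ip c n A = (\<Sum>j=1..n. c j * sval sc ip j A)"

definition outer :: "(complex \<Rightarrow> 'a \<Rightarrow> 'a) \<Rightarrow> ('a \<Rightarrow> 'a \<Rightarrow> complex) \<Rightarrow> 'a \<Rightarrow> 'a \<Rightarrow> 'a \<Rightarrow> 'a" where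
  "outer sc ip x y = (\<lambda>v. sc (ip v y) x)"

definition desc_pos :: "(nat \<Rightarrow> real) \<Rightarrow> nat \<Rightarrow> bool" where
  "desc_pos c n \<longleftrightarrow> (\<forall>i j. 1 \<le> i \<longrightarrow> i \<le> j \<longrightarrow> j \<le> n \<longrightarrow> c j \<le> c i) \<and> 0 < c n"

end

theory Submission
  imports Defs
begin

text \<open>
  Singular values satisfy \<open>s\<^sub>1(A) = \<parallel>A\<parallel>\<close>, \<open>s\<^sub>k(AB) \<le> \<parallel>A\<parallel> s\<^sub>k(B)\<close> and
  \<open>s\<^sub>k(AB) \<le> s\<^sub>k(A) \<parallel>B\<parallel>\<close>. Since \<open>c\<^sub>1 \<parallel>A\<parallel> \<le> \<parallel>A\<parallel>\<^sub>c\<close>, this gives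
  \<open>\<parallel>AB\<parallel>\<^sub>c \<le> \<parallel>A\<parallel> \<parallel>B\<parallel>\<^sub>c \<le> \<parallel>A\<parallel>\<^sub>c \<parallel>B\<parallel>\<^sub>c\<close> when \<open>c\<^sub>1 \<ge> 1\<close>, strictly for nonzero
  \<open>A, B\<close> when \<open>c\<^sub>1 > 1\<close>. A rank-one projection \<open>P = ee\<^sup>*\<close> has \<open>P\<^sup>2 = P\<close> and
  \<open>\<parallel>P\<parallel>\<^sub>c = c\<^sub>1\<close>, which yields the converses in (a)-(c).

  For (e), equality \<open>\<parallel>AB\<parallel>\<^sub>c = \<parallel>A\<parallel>\<^sub>c \<parallel>B\<parallel>\<^sub>c\<close> forces \<open>\<parallel>A\<parallel>\<^sub>c = \<parallel>A\<parallel>\<close> and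
  \<open>\<parallel>B\<parallel>\<^sub>c = \<parallel>B\<parallel>\<close>, hence \<open>s\<^sub>2(A) = s\<^sub>2(B) = 0\<close>. A norm limit of operators of
  rank at most one has rank at most one, so by the Riesz representation theorem \<open>A = xy\<^sup>*\<close>
  and \<open>B = wz\<^sup>*\<close>. Then \<open>\<parallel>AB\<parallel>\<^sub>c = |\<langle>w, y\<rangle>| \<parallel>x\<parallel> \<parallel>z\<parallel>\<close>, and equality is the equality case
  of the Cauchy-Schwarz inequality: \<open>w\<close> is a multiple of \<open>y\<close>.
\<close>

lemma exists_pos_scaled_le:
  fixes p q x y :: real
  assumes "0 < p" and "0 < q" and "0 \<le> x" and "0 \<le> y"
  obtains e where "0 < e" and "e * x \<le> p" and "e * y \<le> q"
proof
  let ?e = "min (p / (x + 1)) (q / (y + 1))"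
  show "0 < ?e"
    using assms by simp
  have "?e * x \<le> p / (x + 1) * x" and "?e * y \<le> q / (y + 1) * y"
    by (rule mult_right_mono[OF min.cobounded1 assms(3)] mult_right_mono[OF min.cobounded2 assms(4)])+
  moreover have "p / (x + 1) * x \<le> p" and "q / (y + 1) * y \<le> q"
    using assms by (simp_all add: field_simps)
  ultimately show "?e * x \<le> p" and "?e * y \<le> q"
    by linarith+
qed

section \<open>Complex Hilbert spaces\<close>

locale hilbert_space =
  fixes sc :: "complex \<Rightarrow> 'a::ab_group_add \<Rightarrow> 'a" and ip :: "'a \<Rightarrow> 'a \<Rightarrow> complex"
  assumes chilbert: "chilbert sc ip"
begin

sublocale vector_space sc
  using chilbert unfolding chilbert_def by blast

abbreviation hn :: "'a \<Rightarrow> real" where "hn \<equiv> hnorm ip"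

lemma
  shows ip_cnj_commute: "ip y x = cnj (ip x y)"
    and ip_add_left [simp]: "ip (x + y) z = ip x z + ip y z"
    and ip_scale_left [simp]: "ip (sc a x) y = a * ip x y"
    and Re_ip_self_nonneg: "0 \<le> Re (ip x x)"
    and ip_self_eq_0D: "ip x x = 0 \<Longrightarrow> x = 0"
    and hnorm_Cauchy_complete: "\<forall>e>0. \<exists>N. \<forall>m\<ge>N. \<forall>k\<ge>N. hn (f m - f k) < e
      \<Longrightarrow> \<exists>l. (\<lambda>m. hn (f m - l)) \<longlonglongrightarrow> 0"
  using chilbert unfolding chilbert_def by meson+

lemma ip_add_right [simp]: "ip z (x + y) = ip z x + ip z y"
  by (metis ip_cnj_commute ip_add_left complex_cnj_add)

lemma ip_scale_right [simp]: "ip x (sc a y) = cnj a * ip x y"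
  by (metis ip_cnj_commute ip_scale_left complex_cnj_mult)

lemma ip_zero_left [simp]: "ip 0 y = 0"
  using ip_scale_left[of 0 0 y] by simp

lemma ip_zero_right [simp]: "ip y 0 = 0"
  using ip_scale_right[of y 0 0] by simp

lemma ip_minus_left [simp]: "ip (- x) y = - ip x y"
  using ip_scale_left[of "-1" x y] by simp

lemma ip_minus_right [simp]: "ip y (- x) = - ip y x"
  using ip_scale_right[of y "-1" x] by simp

lemma ip_diff_left [simp]: "ip (x - z) y = ip x y - ip z y"
  by (simp only: diff_conv_add_uminus ip_add_left ip_minus_left)

lemma ip_diff_right [simp]: "ip y (x - z) = ip y x - ip y z"
  by (simp only: diff_conv_add_uminus ip_add_right ip_minus_right)

lemma hnorm_nonneg [simp]: "0 \<le> hn x"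
  by (simp add: hnorm_def Re_ip_self_nonneg)

lemma ip_self: "ip x x = of_real ((hn x)\<^sup>2)"
  using ip_cnj_commute[of x x] Re_ip_self_nonneg[of x]
  by (simp add: hnorm_def complex_eq_iff)

lemma hnorm_eq_0 [simp]: "hn x = 0 \<longleftrightarrow> x = 0"
  using ip_self[of x] ip_self_eq_0D[of x] by (auto simp: hnorm_def)

lemma hnorm_zero [simp]: "hn 0 = 0"
  by simp

lemma hnorm_pos: "x \<noteq> 0 \<Longrightarrow> 0 < hn x"
  using hnorm_nonneg[of x] hnorm_eq_0[of x] by linarith

lemma hnorm_scale [simp]: "hn (sc a x) = cmod a * hn x"
proof -
  have "ip (sc a x) (sc a x) = (a * cnj a) * ip x x"
    by (simp add: mult.assoc)
  also have "\<dots> = of_real ((cmod a * hn x)\<^sup>2)"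
    by (simp add: ip_self power_mult_distrib flip: complex_norm_square)
  finally have "(hn (sc a x))\<^sup>2 = (cmod a * hn x)\<^sup>2"
    using ip_self[of "sc a x"] of_real_eq_iff by metis
  then show ?thesis
    by (simp add: power2_eq_iff_nonneg)
qed

lemma hnorm_minus [simp]: "hn (- x) = hn x"
  by (simp add: hnorm_def)

lemma hnorm_normalize: "x \<noteq> 0 \<Longrightarrow> hn (sc (of_real (1 / hn x)) x) = 1"
  by (simp add: norm_divide)

lemma Re_ip_commute: "Re (ip y x) = Re (ip x y)"
  by (subst ip_cnj_commute) simp

lemma cmod_ip_commute: "cmod (ip y x) = cmod (ip x y)"
  by (subst ip_cnj_commute) simp

lemma power2_hnorm_add: "(hn (x + y))\<^sup>2 = (hn x)\<^sup>2 + 2 * Re (ip x y) + (hn y)\<^sup>2"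
  using ip_self[of "x + y"] ip_self[of x] ip_self[of y] Re_ip_commute[of y x]
  by (simp add: complex_eq_iff)

lemma power2_hnorm_diff: "(hn (x - y))\<^sup>2 = (hn x)\<^sup>2 - 2 * Re (ip x y) + (hn y)\<^sup>2"
  using power2_hnorm_add[of x "- y"] by simp

lemma pythagoras: "ip x y = 0 \<Longrightarrow> (hn (x + y))\<^sup>2 = (hn x)\<^sup>2 + (hn y)\<^sup>2"
  by (simp add: power2_hnorm_add)

lemma parallelogram: "(hn (x + y))\<^sup>2 + (hn (x - y))\<^sup>2 = 2 * (hn x)\<^sup>2 + 2 * (hn y)\<^sup>2"
  by (simp add: power2_hnorm_add power2_hnorm_diff)

lemma ip_projection_orthogonal:
  assumes "y \<noteq> 0"
  shows "ip (x - sc (ip x y / ip y y) y) y = 0"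
  using assms by (simp add: ip_self)

lemma orthogonal_decomposition:
  assumes "y \<noteq> 0"
  shows "(hn x)\<^sup>2 = (hn (x - sc (ip x y / ip y y) y))\<^sup>2 + (cmod (ip x y))\<^sup>2 / (hn y)\<^sup>2"
proof -
  have "(hn x)\<^sup>2 = (hn ((x - sc (ip x y / ip y y) y) + sc (ip x y / ip y y) y))\<^sup>2"
    by simp
  also have "\<dots> = (hn (x - sc (ip x y / ip y y) y))\<^sup>2 + (hn (sc (ip x y / ip y y) y))\<^sup>2"
    using ip_projection_orthogonal[OF assms] by (intro pythagoras) simp
  also have "(hn (sc (ip x y / ip y y) y))\<^sup>2 = (cmod (ip x y))\<^sup>2 / (hn y)\<^sup>2"
    using assms by (simp add: ip_self norm_divide power_mult_distrib power_divide norm_power)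
      (simp add: power2_eq_square power4_eq_xxxx field_simps)
  finally show ?thesis .
qed

lemma Cauchy_Schwarz: "cmod (ip x y) \<le> hn x * hn y"
proof (cases "y = 0")
  case False
  then have "(cmod (ip x y))\<^sup>2 / (hn y)\<^sup>2 \<le> (hn x)\<^sup>2"
    using orthogonal_decomposition[of y x] by simp
  then have "(cmod (ip x y))\<^sup>2 \<le> (hn x * hn y)\<^sup>2"
    using False by (simp add: divide_le_eq power_mult_distrib)
  then show ?thesis
    by (rule power2_le_imp_le) simp
qed simp

lemma Cauchy_Schwarz_eq_imp_parallel:
  assumes "y \<noteq> 0" and "cmod (ip x y) = hn x * hn y"
  shows "x = sc (ip x y / ip y y) y"
proof -
  have "(hn (x - sc (ip x y / ip y y) y))\<^sup>2 = 0"
    using orthogonal_decomposition[of y x] assms hnorm_pos[OF assms(1)]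
    by (simp add: power_mult_distrib)
  then show ?thesis
    by simp
qed

lemma hnorm_triangle: "hn (x + y) \<le> hn x + hn y"
proof -
  have "Re (ip x y) \<le> hn x * hn y"
    using Cauchy_Schwarz[of x y] complex_Re_le_cmod[of "ip x y"] by linarith
  then have "(hn (x + y))\<^sup>2 \<le> (hn x + hn y)\<^sup>2"
    by (simp add: power2_hnorm_add power2_sum)
  then show ?thesis
    by (rule power2_le_imp_le) simp
qed

lemma hnorm_triangle_diff: "hn (x - y) \<le> hn x + hn y"
  using hnorm_triangle[of x "- y"] by simp

lemma best_approximation_on_line:
  "hn (z - sc (ip z b / ip b b) b) \<le> hn (z - sc l b)"
proof (cases "b = 0")
  case False
  let ?t = "ip z b / ip b b"
  have "(hn (z - sc l b))\<^sup>2 = (hn ((z - sc ?t b) + sc (?t - l) b))\<^sup>2"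
    by (simp add: scale_left_diff_distrib)
  also have "\<dots> = (hn (z - sc ?t b))\<^sup>2 + (hn (sc (?t - l) b))\<^sup>2"
    using ip_projection_orthogonal[OF False, of z] by (intro pythagoras) simp
  finally have "(hn (z - sc ?t b))\<^sup>2 \<le> (hn (z - sc l b))\<^sup>2"
    by simp
  then show ?thesis
    by (rule power2_le_imp_le) simp
qed simp

lemma minimizing_sequence_Cauchy:
  assumes M: "\<And>k. vs k \<in> M" and mid: "\<And>x y. x \<in> M \<Longrightarrow> y \<in> M \<Longrightarrow> sc (1/2) (x + y) \<in> M"
    and d: "\<And>v. v \<in> M \<Longrightarrow> d \<le> (hn v)\<^sup>2" and vs: "\<And>k. (hn (vs k))\<^sup>2 < d + 1 / real (Suc k)"
  shows "\<forall>e>0. \<exists>N. \<forall>m\<ge>N. \<forall>k\<ge>N. hn (vs m - vs k) < e"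
proof (intro allI impI)
  have par: "(hn (vs m - vs k))\<^sup>2 \<le> 2 / real (Suc m) + 2 / real (Suc k)" for m k
  proof -
    have "d \<le> (hn (sc (1/2) (vs m + vs k)))\<^sup>2"
      using d mid M by blast
    then have "4 * d \<le> (hn (vs m + vs k))\<^sup>2"
      by (simp add: power_divide)
    then show ?thesis
      using parallelogram[of "vs m" "vs k"] vs[of m] vs[of k] by simp
  qed
  fix e :: real
  assume e: "0 < e"
  obtain N where N: "4 / e\<^sup>2 < real (Suc N)"
    using reals_Archimedean2 by (meson less_Suc_eq of_nat_less_iff order.strict_trans)
  have "hn (vs m - vs k) < e" if "m \<ge> N" "k \<ge> N" for m k
  proof -
    have "2 / real (Suc m) \<le> 2 / real (Suc N)" and "2 / real (Suc k) \<le> 2 / real (Suc N)"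
      using that by (simp_all add: frac_le)
    moreover have "4 / real (Suc N) < e\<^sup>2"
      using N e by (simp add: field_simps)
    ultimately have "(hn (vs m - vs k))\<^sup>2 < e\<^sup>2"
      using par[of m k] by simp
    then show ?thesis
      using e by (simp add: power2_less_imp_less less_imp_le)
  qed
  then show "\<exists>N. \<forall>m\<ge>N. \<forall>k\<ge>N. hn (vs m - vs k) < e"
    by blast
qed

lemma min_norm_exists:
  assumes "M \<noteq> {}" and mid: "\<And>x y. x \<in> M \<Longrightarrow> y \<in> M \<Longrightarrow> sc (1/2) (x + y) \<in> M"
    and closed: "\<And>vs w. (\<And>k. vs k \<in> M) \<Longrightarrow> (\<lambda>k. hn (vs k - w)) \<longlonglongrightarrow> 0 \<Longrightarrow> w \<in> M"
  obtains w where "w \<in> M" and "\<And>v. v \<in> M \<Longrightarrow> hn w \<le> hn v"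
proof -
  define d where "d = Inf ((\<lambda>v. (hn v)\<^sup>2) ` M)"
  have bdd: "bdd_below ((\<lambda>v. (hn v)\<^sup>2) ` M)"
    by (rule bdd_belowI[of _ 0]) auto
  have d_le: "d \<le> (hn v)\<^sup>2" if "v \<in> M" for v
    unfolding d_def using bdd that by (auto intro: cInf_lower)
  have d_nonneg: "0 \<le> d"
    unfolding d_def using assms(1) by (auto intro: cInf_greatest)
  have "\<exists>v\<in>M. (hn v)\<^sup>2 < d + 1 / real (Suc k)" for k
    using cInf_less_iff[OF _ bdd, of "d + 1 / real (Suc k)"] assms(1) by (simp add: d_def)
  then obtain vs where vs_M: "\<And>k. vs k \<in> M" and vs: "\<And>k. (hn (vs k))\<^sup>2 < d + 1 / real (Suc k)"
    by metis
  obtain w where w: "(\<lambda>k. hn (vs k - w)) \<longlonglongrightarrow> 0"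
    using hnorm_Cauchy_complete[OF minimizing_sequence_Cauchy[OF vs_M mid d_le vs]] by blast
  have "hn w \<le> sqrt (d + 1 / real (Suc k)) + hn (vs k - w)" for k
  proof -
    have "hn w \<le> hn (vs k) + hn (vs k - w)"
      using hnorm_triangle_diff[of "vs k" "vs k - w"] by simp
    moreover have "hn (vs k) \<le> sqrt (d + 1 / real (Suc k))"
      using vs[of k] by (simp add: real_le_rsqrt less_imp_le)
    ultimately show ?thesis
      by simp
  qed
  moreover have "(\<lambda>k. sqrt (d + 1 / real (Suc k)) + hn (vs k - w)) \<longlonglongrightarrow> sqrt (d + 0) + 0"
    using LIMSEQ_inverse_real_of_nat by (intro tendsto_intros w) (simp add: inverse_eq_divide)
  ultimately have "hn w \<le> sqrt d"
    by (intro LIMSEQ_le_const[where X = "\<lambda>k. sqrt (d + 1 / real (Suc k)) + hn (vs k - w)"]) auto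
  then have "(hn w)\<^sup>2 \<le> d"
    using d_nonneg by (metis hnorm_nonneg power_mono real_sqrt_pow2)
  then show ?thesis
    using that closed[OF vs_M w] d_le by (meson order_trans power2_le_imp_le hnorm_nonneg)
qed

lemma min_norm_orthogonal:
  assumes min: "\<And>t. hn w \<le> hn (w - sc t z)"
  shows "ip w z = 0"
proof (rule ccontr)
  define p where "p = ip w z"
  define s where "s = 1 / (1 + (hn z)\<^sup>2)"
  define t where "t = of_real s * p"
  assume "ip w z \<noteq> 0"
  then have p: "0 < (cmod p)\<^sup>2"
    by (simp add: p_def)
  have "0 < 1 + (hn z)\<^sup>2"
    by (simp add: add_pos_nonneg)
  then have s: "0 < s" and sZ: "s * (hn z)\<^sup>2 < 1"
    by (simp_all add: s_def)
  have Re_ip: "Re (ip w (sc t z)) = s * (cmod p)\<^sup>2"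
    by (simp add: t_def p_def mult.assoc mult.commute[of "cnj _"] complex_mult_cnj cmod_power2)
  have hn_tz: "hn (sc t z) = s * cmod p * hn z"
    using s by (simp add: t_def norm_mult)
  have "(hn (w - sc t z))\<^sup>2 = (hn w)\<^sup>2 - 2 * Re (ip w (sc t z)) + (hn (sc t z))\<^sup>2"
    by (rule power2_hnorm_diff)
  also have "\<dots> = (hn w)\<^sup>2 - (s * (cmod p)\<^sup>2) * (2 - s * (hn z)\<^sup>2)"
    unfolding Re_ip hn_tz by (simp add: power2_eq_square algebra_simps)
  also have "\<dots> < (hn w)\<^sup>2"
    using s sZ p by simp
  finally show False
    using min[of t] by (meson hnorm_nonneg not_le power_mono)
qed

lemma bounded_additive_tendsto:
  assumes add: "\<And>x y. f (x + y) = f x + f y" and bounded: "\<And>x. cmod (f x) \<le> K * hn x"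
    and lim: "(\<lambda>k. hn (vs k - w)) \<longlonglongrightarrow> 0"
  shows "(\<lambda>k. f (vs k)) \<longlonglongrightarrow> f w"
proof -
  interpret f: additive f
    by standard (rule add)
  have "\<forall>k. norm (f (vs k) - f w) \<le> K * hn (vs k - w)"
    using bounded by (metis f.diff)
  from Lim_null_comparison[OF always_eventually[OF this] tendsto_mult_right_zero[OF lim]]
  show ?thesis
    by (rule LIM_zero_cancel)
qed

lemma Riesz_representation:
  assumes add: "\<And>x y. f (x + y) = f x + f y" and scale: "\<And>a x. f (sc a x) = a * f x"
    and bounded: "\<And>x. cmod (f x) \<le> K * hn x"
  obtains y where "\<And>v. f v = ip v y"
proof (cases "\<forall>v. f v = 0")
  case True
  then show ?thesis
    using that[of 0] by simp
next
  case False
  interpret f: additive f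
    by standard (rule add)
  define M where "M = {v. f v = 1}"
  obtain u where "f u \<noteq> 0"
    using False by blast
  then have "sc (1 / f u) u \<in> M"
    by (simp add: M_def scale)
  then have "M \<noteq> {}"
    by blast
  then obtain w where "w \<in> M" and min: "\<And>v. v \<in> M \<Longrightarrow> hn w \<le> hn v"
  proof (rule min_norm_exists)
    show "sc (1/2) (x + y) \<in> M" if "x \<in> M" "y \<in> M" for x y
      using that by (simp add: M_def scale add)
  next
    fix vs w
    assume M: "\<And>k. vs k \<in> M" and lim: "(\<lambda>k. hn (vs k - w)) \<longlonglongrightarrow> 0"
    have "(\<lambda>k. f (vs k)) \<longlonglongrightarrow> f w"
      by (rule bounded_additive_tendsto[OF add bounded lim])
    moreover have "(\<lambda>k. f (vs k)) \<longlonglongrightarrow> 1"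
      using M by (simp add: M_def)
    ultimately show "w \<in> M"
      by (simp add: M_def LIMSEQ_unique)
  qed blast
  then have w: "f w = 1"
    by (simp add: M_def)
  have orth: "ip w z = 0" if "f z = 0" for z
    using that w by (intro min_norm_orthogonal min) (simp add: M_def f.diff scale)
  have "ip w w \<noteq> 0"
    using w ip_self_eq_0D scale[of 0 0] by force
  show ?thesis
  proof
    fix v
    have "ip w (v - sc (f v) w) = 0"
      using w by (intro orth) (simp add: f.diff scale)
    then have "ip (v - sc (f v) w) w = 0"
      by (metis ip_cnj_commute complex_cnj_zero)
    then show "f v = ip v (sc (cnj (1 / ip w w)) w)"
      using \<open>ip w w \<noteq> 0\<close> by (simp add: field_simps)
  qed
qed

section \<open>Bounded operators\<close>

lemma bop_add: "bop sc ip T \<Longrightarrow> T (x + y) = T x + T y"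
  and bop_scale: "bop sc ip T \<Longrightarrow> T (sc a x) = sc a (T x)"
  by (simp_all add: bop_def)

lemma bop_zero: "bop sc ip T \<Longrightarrow> T 0 = 0"
  using bop_scale[of T 0 0] by simp

lemma bop_diff: "bop sc ip T \<Longrightarrow> T (x - y) = T x - T y"
  using bop_add[of T "x - y" y] by (simp add: eq_diff_eq)

lemma bop_bounded:
  assumes "bop sc ip T"
  obtains K where "0 \<le> K" and "\<And>x. hn (T x) \<le> K * hn x"
proof -
  obtain K where K: "\<And>x. hn (T x) \<le> K * hn x"
    using assms unfolding bop_def by blast
  have "hn (T x) \<le> max K 0 * hn x" for x
    using K[of x] by (meson max.cobounded1 mult_right_mono hnorm_nonneg order_trans)
  then show ?thesis
    using that[of "max K 0"] by simp
qed

lemma hnorm_le_opnorm: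
  assumes "bop sc ip T" and "hn x \<le> 1"
  shows "hn (T x) \<le> opnorm ip T"
proof -
  obtain K where K: "0 \<le> K" "\<And>x. hn (T x) \<le> K * hn x"
    using bop_bounded[OF assms(1)] by blast
  have "hn (T x) \<le> K" if "hn x \<le> 1" for x
    using K(2)[of x] mult_left_mono[OF that K(1)] by simp
  then have "bdd_above {hn (T x) | x. hn x \<le> 1}"
    unfolding bdd_above_def by blast
  then show ?thesis
    unfolding opnorm_def using assms(2) by (auto intro: cSup_upper)
qed

lemma opnorm_nonneg: "bop sc ip T \<Longrightarrow> 0 \<le> opnorm ip T"
  using hnorm_le_opnorm[of T 0] by (simp add: bop_zero)

lemma hnorm_apply_le: 
  assumes "bop sc ip T"
  shows "hn (T x) \<le> opnorm ip T * hn x"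
proof (cases "x = 0")
  case False
  let ?u = "sc (of_real (1 / hn x)) x"
  have "hn (T ?u) \<le> opnorm ip T"
    using hnorm_le_opnorm[OF assms] hnorm_normalize[OF False] by simp
  then show ?thesis
    using hnorm_pos[OF False] by (simp add: bop_scale[OF assms] norm_divide field_simps)
qed (simp add: bop_zero[OF assms])

lemma opnorm_le:
  assumes "0 \<le> M" and "\<And>x. hn (T x) \<le> M * hn x"
  shows "opnorm ip T \<le> M"
  unfolding opnorm_def
proof (rule cSup_least)
  show "{hn (T x) |x. hn x \<le> 1} \<noteq> {}"
    by (auto intro: exI[of _ 0])
next
  fix r assume "r \<in> {hn (T x) |x. hn x \<le> 1}"
  then obtain x where "r = hn (T x)" and "hn x \<le> 1"
    by blast
  then show "r \<le> M"
    using assms(2)[of x] mult_left_mono[of "hn x" 1 M] assms(1) by simp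
qed

lemma bop_zero_fun [simp]: "bop sc ip (\<lambda>_. 0)"
  unfolding bop_def by (auto intro: exI[of _ 0])

lemma opnorm_zero_fun [simp]: "opnorm ip (\<lambda>_. 0) = 0"
  using opnorm_le[of 0 "\<lambda>_. 0"] opnorm_nonneg[OF bop_zero_fun] by simp

lemma opnorm_eq_0_iff:
  assumes "bop sc ip T"
  shows "opnorm ip T = 0 \<longleftrightarrow> T = (\<lambda>_. 0)"
proof
  assume "opnorm ip T = 0"
  then show "T = (\<lambda>_. 0)"
    using hnorm_apply_le[OF assms] by (metis hnorm_eq_0 hnorm_nonneg mult_zero_left order_antisym)
qed simp

lemma opnorm_pos: "bop sc ip T \<Longrightarrow> T \<noteq> (\<lambda>_. 0) \<Longrightarrow> 0 < opnorm ip T"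
  using opnorm_eq_0_iff opnorm_nonneg by force

lemma hnorm_comp_le:
  assumes "bop sc ip A" and "bop sc ip B"
  shows "hn (A (B x)) \<le> (opnorm ip A * opnorm ip B) * hn x"
  using hnorm_apply_le[OF assms(1), of "B x"] hnorm_apply_le[OF assms(2), of x]
    mult_left_mono[OF _ opnorm_nonneg[OF assms(1)]]
  by (fastforce simp: mult.assoc)

lemma bop_comp:
  assumes "bop sc ip A" and "bop sc ip B"
  shows "bop sc ip (A \<circ> B)"
  using hnorm_comp_le[OF assms] assms by (auto simp: bop_def)

lemma opnorm_comp_le:
  assumes "bop sc ip A" and "bop sc ip B"
  shows "opnorm ip (A \<circ> B) \<le> opnorm ip A * opnorm ip B"
  using hnorm_comp_le[OF assms] opnorm_nonneg assms by (auto intro: opnorm_le)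

lemma bop_diff_fun:
  assumes "bop sc ip A" and "bop sc ip X"
  shows "bop sc ip (\<lambda>v. A v - X v)"
proof -
  have "hn (A x - X x) \<le> (opnorm ip A + opnorm ip X) * hn x" for x
    using hnorm_triangle_diff[of "A x" "X x"] hnorm_apply_le[OF assms(1), of x]
      hnorm_apply_le[OF assms(2), of x]
    by (simp add: distrib_right)
  then show ?thesis
    using assms by (auto simp: bop_def scale_right_diff_distrib)
qed

section \<open>Rank and singular values\<close>

lemma rank_lt_mono: "rank_lt sc X k \<Longrightarrow> k \<le> k' \<Longrightarrow> rank_lt sc X k'"
  unfolding rank_lt_def by (meson less_le_trans)

lemma rank_lt_pos: "rank_lt sc X k \<Longrightarrow> 1 \<le> k"
  unfolding rank_lt_def by auto

lemma rank_lt_zero_fun: "1 \<le> k \<Longrightarrow> rank_lt sc (\<lambda>_. 0) k"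
  unfolding rank_lt_def by (auto intro!: exI[of _ "{}"])

lemma rank_lt_1_iff: "rank_lt sc X 1 \<longleftrightarrow> X = (\<lambda>_. 0)"
proof
  assume "rank_lt sc X 1"
  then have "range X \<subseteq> span {}"
    unfolding rank_lt_def by auto
  then show "X = (\<lambda>_. 0)"
    by auto
qed (simp add: rank_lt_zero_fun)

lemma rank_lt_comp_right: "rank_lt sc X k \<Longrightarrow> rank_lt sc (X \<circ> B) k"
  unfolding rank_lt_def by (metis (no_types, lifting) image_comp image_mono subset_UNIV order_trans)

lemma rank_lt_comp_left:
  assumes "bop sc ip A" and "rank_lt sc X k"
  shows "rank_lt sc (A \<circ> X) k"
proof -
  obtain S where S: "finite S" "card S < k" "range X \<subseteq> span S"
    using assms(2) unfolding rank_lt_def by blast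
  have "module_hom sc sc A"
    using assms(1) by (simp add: module_hom_iff bop_add bop_scale module_axioms)
  then have "range (A \<circ> X) \<subseteq> span (A ` S)"
    using module_hom.spans_image[OF _ S(3)] by (simp add: image_comp)
  moreover have "card (A ` S) < k"
    using card_image_le[OF S(1), of A] S(2) by linarith
  ultimately show ?thesis
    unfolding rank_lt_def using S(1) by blast
qed

lemma rank_lt_2_imp_range_line:
  assumes "rank_lt sc X 2"
  obtains b where "\<And>w. \<exists>l. X w = sc l b"
proof -
  obtain S where S: "finite S" "card S < 2" "range X \<subseteq> span S"
    using assms unfolding rank_lt_def by blast
  obtain b where "S \<subseteq> {b}"
  proof (cases "S = {}")
    case False
    then obtain b where "b \<in> S"
      by blast
    moreover have "card S \<le> Suc 0"
      using S(2) by simp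
    ultimately have "S \<subseteq> {b}"
      using card_le_Suc0_iff_eq[OF S(1)] by blast
    then show ?thesis
      using that by blast
  qed (use that in blast)
  then have "range X \<subseteq> range (\<lambda>l. sc l b)"
    using S(3) span_mono span_singleton by blast
  then show ?thesis
    using that by blast
qed

lemma sval_le_opnorm_diff:
  assumes "bop sc ip A" and "bop sc ip X" and "rank_lt sc X k"
  shows "sval sc ip k A \<le> opnorm ip (\<lambda>v. A v - X v)"
  unfolding sval_def
proof (rule cInf_lower)
  show "bdd_below {opnorm ip (\<lambda>v. A v - X v) | X. bop sc ip X \<and> rank_lt sc X k}"
    using assms(1) by (auto intro!: bdd_belowI[of _ 0] opnorm_nonneg bop_diff_fun)
qed (use assms in blast)

lemma le_scaled_sval:
  assumes "1 \<le> k" and "0 \<le> C"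
    and "\<And>X. bop sc ip X \<Longrightarrow> rank_lt sc X k \<Longrightarrow> m \<le> C * opnorm ip (\<lambda>v. A v - X v)"
  shows "m \<le> C * sval sc ip k A"
proof (cases "C = 0")
  case True
  then show ?thesis
    using assms(3)[OF bop_zero_fun rank_lt_zero_fun[OF assms(1)]] by simp
next
  case False
  have "m / C \<le> sval sc ip k A"
    unfolding sval_def
  proof (rule cInf_greatest)
    show "{opnorm ip (\<lambda>v. A v - X v) |X. bop sc ip X \<and> rank_lt sc X k} \<noteq> {}"
      using bop_zero_fun rank_lt_zero_fun[OF assms(1)] by blast
  qed (use False assms(2,3) in \<open>auto simp: divide_le_eq mult.commute\<close>)
  then show ?thesis
    using False assms(2) by (simp add: divide_le_eq mult.commute)
qed

lemma sval_nonneg: "bop sc ip A \<Longrightarrow> 1 \<le> k \<Longrightarrow> 0 \<le> sval sc ip k A"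
  using le_scaled_sval[of k 1 0 A] by (simp add: opnorm_nonneg bop_diff_fun)

lemma sval_less_imp_approx:
  assumes "1 \<le> k" and "sval sc ip k A < e"
  obtains X where "bop sc ip X" and "rank_lt sc X k" and "opnorm ip (\<lambda>v. A v - X v) < e"
proof -
  have "\<not> (\<forall>X. bop sc ip X \<and> rank_lt sc X k \<longrightarrow> e \<le> 1 * opnorm ip (\<lambda>v. A v - X v))"
    using le_scaled_sval[OF assms(1) zero_le_one, of e A] assms(2) by auto
  then show ?thesis
    using that by force
qed

lemma sval_1_eq_opnorm:
  assumes "bop sc ip A"
  shows "sval sc ip 1 A = opnorm ip A"
proof (rule antisym)
  show "sval sc ip 1 A \<le> opnorm ip A"
    using sval_le_opnorm_diff[OF assms bop_zero_fun rank_lt_zero_fun[of 1]] by simp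
  show "opnorm ip A \<le> sval sc ip 1 A"
  proof -
    have "opnorm ip A \<le> 1 * opnorm ip (\<lambda>v. A v - X v)" if "bop sc ip X" "rank_lt sc X 1" for X
      using that(2) unfolding rank_lt_1_iff by simp
    from le_scaled_sval[OF order_refl zero_le_one this] show ?thesis
      by simp
  qed
qed

lemma sval_eq_0_if_rank_lt:
  assumes "bop sc ip A" and "rank_lt sc A k"
  shows "sval sc ip k A = 0"
  using sval_le_opnorm_diff[OF assms(1) assms] sval_nonneg[OF assms(1) rank_lt_pos[OF assms(2)]]
  by simp

lemma sval_comp_le_left:
  assumes A: "bop sc ip A" and B: "bop sc ip B" and k: "1 \<le> k"
  shows "sval sc ip k (A \<circ> B) \<le> opnorm ip A * sval sc ip k B"
proof (rule le_scaled_sval[OF k opnorm_nonneg[OF A]])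
  fix X assume X: "bop sc ip X" "rank_lt sc X k"
  have "sval sc ip k (A \<circ> B) \<le> opnorm ip (\<lambda>v. (A \<circ> B) v - (A \<circ> X) v)"
    using sval_le_opnorm_diff[OF bop_comp[OF A B] bop_comp[OF A X(1)] rank_lt_comp_left[OF A X(2)]] .
  also have "(\<lambda>v. (A \<circ> B) v - (A \<circ> X) v) = A \<circ> (\<lambda>v. B v - X v)"
    by (auto simp: bop_diff[OF A])
  also have "opnorm ip \<dots> \<le> opnorm ip A * opnorm ip (\<lambda>v. B v - X v)"
    by (rule opnorm_comp_le[OF A bop_diff_fun[OF B X(1)]])
  finally show "sval sc ip k (A \<circ> B) \<le> opnorm ip A * opnorm ip (\<lambda>v. B v - X v)" .
qed

lemma sval_comp_le_right:
  assumes A: "bop sc ip A" and B: "bop sc ip B" and k: "1 \<le> k"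
  shows "sval sc ip k (A \<circ> B) \<le> sval sc ip k A * opnorm ip B"
proof -
  have "sval sc ip k (A \<circ> B) \<le> opnorm ip B * sval sc ip k A"
  proof (rule le_scaled_sval[OF k opnorm_nonneg[OF B]])
    fix X assume X: "bop sc ip X" "rank_lt sc X k"
    have "sval sc ip k (A \<circ> B) \<le> opnorm ip (\<lambda>v. (A \<circ> B) v - (X \<circ> B) v)"
      using sval_le_opnorm_diff[OF bop_comp[OF A B] bop_comp[OF X(1) B] rank_lt_comp_right[OF X(2)]] .
    also have "(\<lambda>v. (A \<circ> B) v - (X \<circ> B) v) = (\<lambda>v. A v - X v) \<circ> B"
      by auto
    also have "opnorm ip \<dots> \<le> opnorm ip (\<lambda>v. A v - X v) * opnorm ip B"
      by (rule opnorm_comp_le[OF bop_diff_fun[OF A X(1)] B])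
    finally show "sval sc ip k (A \<circ> B) \<le> opnorm ip B * opnorm ip (\<lambda>v. A v - X v)"
      by (simp add: mult.commute comp_def)
  qed
  then show ?thesis
    by (simp add: mult.commute)
qed

section \<open>Rank-one operators\<close>

lemma hnorm_outer_apply_le: "hn (outer sc ip x y v) \<le> hn x * hn y * hn v"
proof -
  have "cmod (ip v y) * hn x \<le> (hn v * hn y) * hn x"
    by (rule mult_right_mono[OF Cauchy_Schwarz hnorm_nonneg])
  then show ?thesis
    by (simp add: outer_def mult_ac)
qed

lemma bop_outer: "bop sc ip (outer sc ip x y)"
  using hnorm_outer_apply_le[of x y]
  unfolding bop_def by (auto simp: outer_def scale_left_distrib)

lemma opnorm_outer: "opnorm ip (outer sc ip x y) = hn x * hn y"
proof (rule antisym)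
  show "opnorm ip (outer sc ip x y) \<le> hn x * hn y"
    by (intro opnorm_le hnorm_outer_apply_le) simp
next
  show "hn x * hn y \<le> opnorm ip (outer sc ip x y)"
  proof (cases "y = 0")
    case False
    let ?v = "sc (of_real (1 / hn y)) y"
    have "hn (outer sc ip x y ?v) = hn x * hn y"
      using False by (simp add: outer_def ip_self norm_divide power2_eq_square)
    moreover have "hn (outer sc ip x y ?v) \<le> opnorm ip (outer sc ip x y)"
      by (rule hnorm_le_opnorm[OF bop_outer]) (simp add: False norm_divide)
    ultimately show ?thesis
      by simp
  qed (simp add: opnorm_nonneg[OF bop_outer])
qed

lemma outer_comp: "outer sc ip x y \<circ> outer sc ip w z = outer sc ip (sc (ip w y) x) z"
  by (rule ext) (simp add: outer_def)

lemma outer_eq_0_iff: "outer sc ip x y = (\<lambda>_. 0) \<longleftrightarrow> x = 0 \<or> y = 0"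
proof
  assume "outer sc ip x y = (\<lambda>_. 0)"
  then have "sc (ip y y) x = 0"
    unfolding outer_def by meson
  then show "x = 0 \<or> y = 0"
    using ip_self_eq_0D by auto
qed (auto simp: outer_def)

lemma outer_scale_left: "outer sc ip (sc t y) z = outer sc ip y (sc (cnj t) z)"
  by (rule ext) (simp add: outer_def mult.commute)

lemma rank_lt_outer: "rank_lt sc (outer sc ip x y) 2"
  unfolding rank_lt_def outer_def
  by (intro exI[of _ "{x}"]) (auto simp: span_singleton)

lemma Bessel_inequality_two:
  assumes "ip a r = 0" and "a \<noteq> 0" and "r \<noteq> 0"
  shows "(cmod (ip b a))\<^sup>2 / (hn a)\<^sup>2 + (cmod (ip b r))\<^sup>2 / (hn r)\<^sup>2 \<le> (hn b)\<^sup>2"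
proof -
  define b' where "b' = b - sc (ip b a / ip a a) a"
  have "(hn b)\<^sup>2 = (hn b')\<^sup>2 + (cmod (ip b a))\<^sup>2 / (hn a)\<^sup>2"
    unfolding b'_def by (rule orthogonal_decomposition[OF assms(2)])
  moreover have "ip b' r = ip b r"
    using assms(1) by (simp add: b'_def)
  then have "(cmod (ip b r))\<^sup>2 / (hn r)\<^sup>2 \<le> (hn b')\<^sup>2"
    using orthogonal_decomposition[OF assms(3), of b'] by simp
  ultimately show ?thesis
    by linarith
qed

lemma near_line_imp_large_component:
  assumes "hn (a - sc l b) \<le> hn a / 2"
  shows "3 * (hn a)\<^sup>2 * (hn b)\<^sup>2 \<le> 4 * (cmod (ip a b))\<^sup>2"
proof (cases "b = 0")
  case False
  have "(hn a)\<^sup>2 - (cmod (ip a b))\<^sup>2 / (hn b)\<^sup>2 = (hn (a - sc (ip a b / ip b b) b))\<^sup>2"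
    using orthogonal_decomposition[OF False, of a] by simp
  also have "\<dots> \<le> (hn (a - sc l b))\<^sup>2"
    using best_approximation_on_line by (simp add: power_mono)
  also have "\<dots> \<le> (hn a / 2)\<^sup>2"
    using assms by (simp add: power_mono)
  finally have "3 * (hn a)\<^sup>2 \<le> 4 * (cmod (ip a b))\<^sup>2 / (hn b)\<^sup>2"
    by (simp add: power_divide mult_ac)
  moreover have "0 < (hn b)\<^sup>2"
    using False by simp
  ultimately show ?thesis
    by (simp add: pos_le_divide_eq)
qed simp

text \<open>Being within half its length of the line, each vector has squared cosine at least
  \<open>3/4\<close> with it, whereas by Bessel's inequality the squared cosines of two orthogonal
  vectors with a line sum to at most \<open>1\<close>.\<close>

lemma orthogonal_not_near_common_line:
  assumes "ip a r = 0" and "a \<noteq> 0" and "r \<noteq> 0"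
    and "hn (a - sc la b) \<le> hn a / 2" and "hn (r - sc lr b) \<le> hn r / 2"
  shows False
proof -
  have "b \<noteq> 0"
    using assms(4) hnorm_pos[OF assms(2)] by auto
  have "0 < (hn a)\<^sup>2" and "0 < (hn r)\<^sup>2"
    using assms(2,3) by simp_all
  then have "3 / 4 * (hn b)\<^sup>2 \<le> (cmod (ip b a))\<^sup>2 / (hn a)\<^sup>2"
    and "3 / 4 * (hn b)\<^sup>2 \<le> (cmod (ip b r))\<^sup>2 / (hn r)\<^sup>2"
    using near_line_imp_large_component[OF assms(4)] near_line_imp_large_component[OF assms(5)]
    by (simp_all add: cmod_ip_commute pos_le_divide_eq mult_ac)
  moreover have "0 < (hn b)\<^sup>2"
    using \<open>b \<noteq> 0\<close> by simp
  ultimately show False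
    using Bessel_inequality_two[OF assms(1-3), of b] by linarith
qed

lemma sval_2_eq_0_imp_near_lines:
  assumes "bop sc ip A" and "sval sc ip 2 A = 0" and "0 < e"
  obtains b where "\<And>w. \<exists>l. hn (A w - sc l b) \<le> e * hn w"
proof -
  obtain X where X: "bop sc ip X" "rank_lt sc X 2" "opnorm ip (\<lambda>v. A v - X v) < e"
    using sval_less_imp_approx[of 2 A e] assms(2,3) by auto
  obtain b where b: "\<And>w. \<exists>l. X w = sc l b"
    using rank_lt_2_imp_range_line[OF X(2)] by blast
  have "hn (A w - X w) \<le> e * hn w" for w
    using hnorm_apply_le[OF bop_diff_fun[OF assms(1) X(1)], of w] X(3)
      mult_right_mono[of "opnorm ip (\<lambda>v. A v - X v)" e "hn w"]
    by simp
  then show ?thesis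
    using b that by metis
qed

lemma sval_2_eq_0_imp_collinear:
  assumes A: "bop sc ip A" and "sval sc ip 2 A = 0" and a: "A u \<noteq> 0"
  shows "A v = sc (ip (A v) (A u) / ip (A u) (A u)) (A u)"
proof (rule ccontr)
  define v' where "v' = v - sc (ip (A v) (A u) / ip (A u) (A u)) u"
  have Av': "A v' = A v - sc (ip (A v) (A u) / ip (A u) (A u)) (A u)"
    by (simp add: v'_def bop_diff[OF A] bop_scale[OF A])
  assume "A v \<noteq> sc (ip (A v) (A u) / ip (A u) (A u)) (A u)"
  then have r: "A v' \<noteq> 0"
    by (simp add: Av')
  have orth: "ip (A u) (A v') = 0"
    using ip_projection_orthogonal[OF a, of "A v"] by (metis Av' complex_cnj_zero ip_cnj_commute)
  obtain e where e: "0 < e" "e * hn u \<le> hn (A u) / 2" "e * hn v' \<le> hn (A v') / 2"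
    using exists_pos_scaled_le[of "hn (A u) / 2" "hn (A v') / 2" "hn u" "hn v'"]
      hnorm_pos[OF a] hnorm_pos[OF r] by auto
  obtain b where b: "\<And>w. \<exists>l. hn (A w - sc l b) \<le> e * hn w"
    using sval_2_eq_0_imp_near_lines[OF A assms(2) e(1)] by blast
  obtain la lr where "hn (A u - sc la b) \<le> e * hn u" and "hn (A v' - sc lr b) \<le> e * hn v'"
    using b by metis
  then show False
    using orthogonal_not_near_common_line[OF orth a r, of la b lr] e(2,3) by linarith
qed

lemma sval_2_eq_0_imp_outer:
  assumes A: "bop sc ip A" and "sval sc ip 2 A = 0"
  obtains x y where "A = outer sc ip x y"
proof (cases "A = (\<lambda>_. 0)")
  case True
  then show ?thesis
    using that outer_eq_0_iff by metis
next
  case False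
  then obtain u where a: "A u \<noteq> 0"
    by auto
  define f where "f v = ip (A v) (A u) / ip (A u) (A u)" for v
  have add: "f (x + y) = f x + f y" for x y
    by (simp add: f_def bop_add[OF A] add_divide_distrib)
  have scale: "f (sc c x) = c * f x" for c x
    by (simp add: f_def bop_scale[OF A])
  have bounded: "cmod (f v) \<le> (opnorm ip A / hn (A u)) * hn v" for v
  proof -
    have "cmod (f v) = cmod (ip (A v) (A u)) / (hn (A u))\<^sup>2"
      by (simp add: f_def norm_divide ip_self norm_mult power2_eq_square)
    also have "\<dots> \<le> opnorm ip A * hn v * hn (A u) / (hn (A u))\<^sup>2"
      using Cauchy_Schwarz[of "A v" "A u"] mult_right_mono[OF hnorm_apply_le[OF A, of v] hnorm_nonneg[of "A u"]]
      by (intro divide_right_mono) simp_all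
    also have "\<dots> = (opnorm ip A / hn (A u)) * hn v"
      using hnorm_pos[OF a] by (simp add: power2_eq_square)
    finally show ?thesis .
  qed
  obtain y where y: "\<And>v. f v = ip v y"
    using Riesz_representation[OF add scale bounded] by blast
  have "A v = outer sc ip (A u) y v" for v
    using sval_2_eq_0_imp_collinear[OF A assms(2) a, of v] y[of v]
    by (simp only: f_def outer_def)
  then have "A = outer sc ip (A u) y"
    by blast
  then show ?thesis
    using that by blast
qed

section \<open>The norms \<open>\<parallel>A\<parallel>\<^sub>c\<close>\<close>

lemma desc_pos_pos: "desc_pos c n \<Longrightarrow> 1 \<le> j \<Longrightarrow> j \<le> n \<Longrightarrow> 0 < c j"
  unfolding desc_pos_def by (meson less_le_trans order_refl)

lemma cnorm_split:
  "1 \<le> n \<Longrightarrow> cnorm sc ip c n A = c 1 * sval sc ip 1 A + (\<Sum>j=2..n. c j * sval sc ip j A)"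
  unfolding cnorm_def by (simp add: sum.atLeast_Suc_atMost numeral_2_eq_2)

lemma cnorm_eq_sval_1:
  assumes "1 \<le> n" and "c 1 = 1" and "\<forall>j\<in>{2..n}. c j = 0"
  shows "cnorm sc ip c n A = sval sc ip 1 A"
  using assms by (simp add: cnorm_split)

lemma cnorm_tail_nonneg:
  assumes "desc_pos c n" and "bop sc ip A"
  shows "0 \<le> (\<Sum>j=2..n. c j * sval sc ip j A)"
  using assms by (intro sum_nonneg) (auto intro!: mult_nonneg_nonneg sval_nonneg less_imp_le[OF desc_pos_pos])

lemma cnorm_ge_opnorm:
  assumes "desc_pos c n" and "1 \<le> n" and "bop sc ip A"
  shows "c 1 * opnorm ip A \<le> cnorm sc ip c n A"
  using assms cnorm_tail_nonneg[OF assms(1,3)] sval_1_eq_opnorm[OF assms(3)] by (simp add: cnorm_split)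

lemma cnorm_nonneg:
  assumes "desc_pos c n" and "1 \<le> n" and "bop sc ip A"
  shows "0 \<le> cnorm sc ip c n A"
  using cnorm_ge_opnorm[OF assms] desc_pos_pos[OF assms(1) order_refl assms(2)] opnorm_nonneg[OF assms(3)]
  by (meson less_imp_le mult_nonneg_nonneg order_trans)

lemma cnorm_comp_le_left:
  assumes "desc_pos c n" and A: "bop sc ip A" and B: "bop sc ip B"
  shows "cnorm sc ip c n (A \<circ> B) \<le> opnorm ip A * cnorm sc ip c n B"
  unfolding cnorm_def sum_distrib_left
proof (rule sum_mono)
  fix j assume "j \<in> {1..n}"
  then have "c j * sval sc ip j (A \<circ> B) \<le> c j * (opnorm ip A * sval sc ip j B)"
    using desc_pos_pos[OF assms(1)] sval_comp_le_left[OF A B] by (auto intro: mult_left_mono)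
  then show "c j * sval sc ip j (A \<circ> B) \<le> opnorm ip A * (c j * sval sc ip j B)"
    by (simp add: mult_ac)
qed

lemma cnorm_comp_le_right:
  assumes "desc_pos c n" and A: "bop sc ip A" and B: "bop sc ip B"
  shows "cnorm sc ip c n (A \<circ> B) \<le> cnorm sc ip c n A * opnorm ip B"
  unfolding cnorm_def sum_distrib_right
proof (rule sum_mono)
  fix j assume "j \<in> {1..n}"
  then have "c j * sval sc ip j (A \<circ> B) \<le> c j * (sval sc ip j A * opnorm ip B)"
    using desc_pos_pos[OF assms(1)] sval_comp_le_right[OF A B] by (auto intro: mult_left_mono)
  then show "c j * sval sc ip j (A \<circ> B) \<le> c j * sval sc ip j A * opnorm ip B"
    by (simp add: mult_ac)
qed

lemma cnorm_rank_lt_2: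
  assumes "1 \<le> n" and "bop sc ip A" and "rank_lt sc A 2"
  shows "cnorm sc ip c n A = c 1 * opnorm ip A"
proof -
  have "(\<Sum>j=2..n. c j * sval sc ip j A) = 0"
    using sval_eq_0_if_rank_lt[OF assms(2) rank_lt_mono[OF assms(3)]] by (auto intro!: sum.neutral)
  then show ?thesis
    using assms sval_1_eq_opnorm[OF assms(2)] by (simp add: cnorm_split)
qed

lemma cnorm_outer: "1 \<le> n \<Longrightarrow> cnorm sc ip c n (outer sc ip x y) = c 1 * (hn x * hn y)"
  using cnorm_rank_lt_2[OF _ bop_outer rank_lt_outer] opnorm_outer by simp

lemma cnorm_outer_comp:
  "1 \<le> n \<Longrightarrow> cnorm sc ip c n (outer sc ip x y \<circ> outer sc ip w z) = c 1 * (cmod (ip w y) * hn x * hn z)"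
  by (simp add: outer_comp cnorm_outer mult_ac)

lemma opnorm_less_cnorm_if_sval_2:
  assumes "desc_pos c n" and "2 \<le> n" and A: "bop sc ip A" and "sval sc ip 2 A \<noteq> 0"
  shows "c 1 * opnorm ip A < cnorm sc ip c n A"
proof -
  have "0 < c 2 * sval sc ip 2 A"
    using desc_pos_pos[OF assms(1) _ assms(2)] sval_nonneg[OF A, of 2] assms(4) by simp
  also have "\<dots> \<le> (\<Sum>j=2..n. c j * sval sc ip j A)"
    using assms(2)
    by (intro member_le_sum) (auto intro!: mult_nonneg_nonneg less_imp_le[OF desc_pos_pos[OF assms(1)]] sval_nonneg[OF A])
  finally show ?thesis
    using assms(2) sval_1_eq_opnorm[OF A] by (simp add: cnorm_split)
qed

lemma rank_one_projection:
  fixes x :: 'a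
  assumes "x \<noteq> 0"
  obtains P where "bop sc ip P" and "rank_lt sc P 2" and "P \<circ> P = P" and "opnorm ip P = 1"
proof -
  define e where "e = sc (of_real (1 / hn x)) x"
  have e: "hn e = 1"
    unfolding e_def using hnorm_normalize[OF assms] .
  have "outer sc ip e e \<circ> outer sc ip e e = outer sc ip e e"
    using e by (simp add: outer_comp ip_self)
  moreover have "opnorm ip (outer sc ip e e) = 1"
    using e by (simp add: opnorm_outer)
  ultimately show ?thesis
    using that bop_outer rank_lt_outer by blast
qed

lemma cnorm_comp_le_mult:
  assumes "desc_pos c n" and "1 \<le> n" and "1 \<le> c 1" and A: "bop sc ip A" and B: "bop sc ip B"
  shows "cnorm sc ip c n (A \<circ> B) \<le> cnorm sc ip c n A * cnorm sc ip c n B"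
proof -
  have "opnorm ip A \<le> cnorm sc ip c n A"
    using cnorm_ge_opnorm[OF assms(1,2) A] mult_right_mono[OF assms(3) opnorm_nonneg[OF A]] by simp
  then have "opnorm ip A * cnorm sc ip c n B \<le> cnorm sc ip c n A * cnorm sc ip c n B"
    by (rule mult_right_mono[OF _ cnorm_nonneg[OF assms(1,2) B]])
  then show ?thesis
    using cnorm_comp_le_left[OF assms(1) A B] by linarith
qed

lemma cnorm_comp_less_mult:
  assumes "desc_pos c n" and "1 \<le> n" and "1 < c 1" and A: "bop sc ip A" and B: "bop sc ip B"
    and "A \<noteq> (\<lambda>_. 0)" and "B \<noteq> (\<lambda>_. 0)"
  shows "cnorm sc ip c n (A \<circ> B) < cnorm sc ip c n A * cnorm sc ip c n B"
proof -
  have A0: "0 < opnorm ip A" and B0: "0 < opnorm ip B"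
    using opnorm_pos A B assms(6,7) by blast+
  then have cB: "0 < cnorm sc ip c n B"
    using cnorm_ge_opnorm[OF assms(1,2) B] assms(3) by (smt (verit) mult_pos_pos)
  have "cnorm sc ip c n (A \<circ> B) \<le> opnorm ip A * cnorm sc ip c n B"
    by (rule cnorm_comp_le_left[OF assms(1) A B])
  also have "\<dots> < (c 1 * opnorm ip A) * cnorm sc ip c n B"
    using A0 cB assms(3) by (intro mult_strict_right_mono) auto
  also have "\<dots> \<le> cnorm sc ip c n A * cnorm sc ip c n B"
    using cnorm_ge_opnorm[OF assms(1,2) A] cB by (intro mult_right_mono) auto
  finally show ?thesis .
qed

lemma cnorm_submultiplicative_iff:
  fixes x :: 'a
  assumes "desc_pos c n" and "1 \<le> n" and "x \<noteq> 0"
  shows "(\<forall>A B. bop sc ip A \<and> bop sc ip B \<longrightarrow>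
            cnorm sc ip c n (A \<circ> B) \<le> cnorm sc ip c n A * cnorm sc ip c n B) \<longleftrightarrow> 1 \<le> c 1"
proof
  obtain P where P: "bop sc ip P" "rank_lt sc P 2" "P \<circ> P = P" "opnorm ip P = 1"
    using rank_one_projection[OF assms(3)] .
  assume "\<forall>A B. bop sc ip A \<and> bop sc ip B \<longrightarrow>
            cnorm sc ip c n (A \<circ> B) \<le> cnorm sc ip c n A * cnorm sc ip c n B"
  then have "cnorm sc ip c n (P \<circ> P) \<le> cnorm sc ip c n P * cnorm sc ip c n P"
    using P(1) by blast
  moreover have "cnorm sc ip c n P = c 1"
    using cnorm_rank_lt_2[OF assms(2) P(1,2)] P(4) by simp
  ultimately have "c 1 \<le> c 1 * c 1"
    using P(3) by simp
  then show "1 \<le> c 1"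
    using desc_pos_pos[OF assms(1) order_refl assms(2)] by simp
qed (use cnorm_comp_le_mult[OF assms(1,2)] in blast)

lemma cnorm_cross_norm_iff:
  fixes x :: 'a
  assumes "1 \<le> n" and "x \<noteq> 0"
  shows "(\<forall>A. bop sc ip A \<and> \<not> rank_lt sc A 1 \<and> rank_lt sc A 2 \<longrightarrow>
            cnorm sc ip c n A = sval sc ip 1 A) \<longleftrightarrow> c 1 = 1"
proof
  obtain P where P: "bop sc ip P" "rank_lt sc P 2" "P \<circ> P = P" "opnorm ip P = 1"
    using rank_one_projection[OF assms(2)] .
  then have "\<not> rank_lt sc P 1"
    using rank_lt_1_iff opnorm_zero_fun by force
  moreover assume "\<forall>A. bop sc ip A \<and> \<not> rank_lt sc A 1 \<and> rank_lt sc A 2 \<longrightarrow>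
            cnorm sc ip c n A = sval sc ip 1 A"
  ultimately have "cnorm sc ip c n P = sval sc ip 1 P"
    using P(1,2) by blast
  then show "c 1 = 1"
    using cnorm_rank_lt_2[OF assms(1) P(1,2)] sval_1_eq_opnorm[OF P(1)] P(4) by simp
qed (use cnorm_rank_lt_2[OF assms(1)] sval_1_eq_opnorm in auto)

lemma cnorm_comp_eq_exists_iff:
  fixes x :: 'a
  assumes "desc_pos c n" and "1 \<le> n" and "1 \<le> c 1" and "x \<noteq> 0"
  shows "(\<exists>A B. bop sc ip A \<and> bop sc ip B \<and> A \<noteq> (\<lambda>_. 0) \<and> B \<noteq> (\<lambda>_. 0) \<and>
            cnorm sc ip c n (A \<circ> B) = cnorm sc ip c n A * cnorm sc ip c n B) \<longleftrightarrow> c 1 = 1"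
proof
  assume "\<exists>A B. bop sc ip A \<and> bop sc ip B \<and> A \<noteq> (\<lambda>_. 0) \<and> B \<noteq> (\<lambda>_. 0) \<and>
            cnorm sc ip c n (A \<circ> B) = cnorm sc ip c n A * cnorm sc ip c n B"
  then show "c 1 = 1"
    using cnorm_comp_less_mult[OF assms(1,2)] assms(3) by force
next
  assume "c 1 = 1"
  obtain P where P: "bop sc ip P" "rank_lt sc P 2" "P \<circ> P = P" "opnorm ip P = 1"
    using rank_one_projection[OF assms(4)] .
  then have "P \<noteq> (\<lambda>_. 0)" and "cnorm sc ip c n P = 1"
    using cnorm_rank_lt_2[OF assms(2) P(1,2)] \<open>c 1 = 1\<close> by auto
  then show "\<exists>A B. bop sc ip A \<and> bop sc ip B \<and> A \<noteq> (\<lambda>_. 0) \<and> B \<noteq> (\<lambda>_. 0) \<and>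
            cnorm sc ip c n (A \<circ> B) = cnorm sc ip c n A * cnorm sc ip c n B"
    using P by (intro exI[of _ P] conjI) simp_all
qed

lemma cnorm_comp_eq_imp_sval_2_eq_0:
  assumes "desc_pos c n" and "2 \<le> n" and "c 1 = 1" and A: "bop sc ip A" and B: "bop sc ip B"
    and "A \<noteq> (\<lambda>_. 0)" and "B \<noteq> (\<lambda>_. 0)"
    and eq: "cnorm sc ip c n (A \<circ> B) = cnorm sc ip c n A * cnorm sc ip c n B"
  shows "sval sc ip 2 A = 0" and "sval sc ip 2 B = 0"
proof -
  have n: "1 \<le> n"
    using assms(2) by simp
  have cA: "0 < cnorm sc ip c n A" and cB: "0 < cnorm sc ip c n B"
    using cnorm_ge_opnorm[OF assms(1) n] opnorm_pos A B assms(3,6,7) by (metis mult_1 order.strict_trans2)+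
  show "sval sc ip 2 A = 0"
  proof (rule ccontr)
    assume "sval sc ip 2 A \<noteq> 0"
    then have "opnorm ip A * cnorm sc ip c n B < cnorm sc ip c n A * cnorm sc ip c n B"
      using opnorm_less_cnorm_if_sval_2[OF assms(1,2) A] assms(3) cB by simp
    then show False
      using cnorm_comp_le_left[OF assms(1) A B] eq by simp
  qed
  show "sval sc ip 2 B = 0"
  proof (rule ccontr)
    assume "sval sc ip 2 B \<noteq> 0"
    then have "cnorm sc ip c n A * opnorm ip B < cnorm sc ip c n A * cnorm sc ip c n B"
      using opnorm_less_cnorm_if_sval_2[OF assms(1,2) B] assms(3) cA by simp
    then show False
      using cnorm_comp_le_right[OF assms(1) A B] eq by simp
  qed
qed

lemma cnorm_comp_eq_iff_outer:
  assumes "desc_pos c n" and "2 \<le> n" and "c 1 = 1" and A: "bop sc ip A" and B: "bop sc ip B"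
    and "A \<noteq> (\<lambda>_. 0)" and "B \<noteq> (\<lambda>_. 0)"
  shows "cnorm sc ip c n (A \<circ> B) = cnorm sc ip c n A * cnorm sc ip c n B \<longleftrightarrow>
    (\<exists>x y z. x \<noteq> 0 \<and> y \<noteq> 0 \<and> z \<noteq> 0 \<and> A = outer sc ip x y \<and> B = outer sc ip y z)"
proof
  have n: "1 \<le> n"
    using assms(2) by simp
  assume eq: "cnorm sc ip c n (A \<circ> B) = cnorm sc ip c n A * cnorm sc ip c n B"
  obtain x y where Axy: "A = outer sc ip x y"
    using sval_2_eq_0_imp_outer[OF A cnorm_comp_eq_imp_sval_2_eq_0(1)[OF assms eq]] .
  obtain w z where Bwz: "B = outer sc ip w z"
    using sval_2_eq_0_imp_outer[OF B cnorm_comp_eq_imp_sval_2_eq_0(2)[OF assms eq]] .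
  have nonzero: "x \<noteq> 0" "y \<noteq> 0" "w \<noteq> 0" "z \<noteq> 0"
    using assms(6,7) Axy Bwz outer_eq_0_iff by blast+
  have "cmod (ip w y) * (hn x * hn z) = (hn w * hn y) * (hn x * hn z)"
    using eq assms(3) unfolding Axy Bwz cnorm_outer_comp[OF n] cnorm_outer[OF n] by (simp add: mult_ac)
  then have "cmod (ip w y) = hn w * hn y"
    using hnorm_pos nonzero by simp
  then have "B = outer sc ip y (sc (cnj (ip w y / ip y y)) z)"
    using Bwz Cauchy_Schwarz_eq_imp_parallel[OF nonzero(2)] outer_scale_left by metis
  moreover have "sc (cnj (ip w y / ip y y)) z \<noteq> 0"
    using nonzero \<open>cmod (ip w y) = hn w * hn y\<close> hnorm_pos by (auto simp: ip_self)
  ultimately show "\<exists>x y z. x \<noteq> 0 \<and> y \<noteq> 0 \<and> z \<noteq> 0 \<and> A = outer sc ip x y \<and> B = outer sc ip y z"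
    using Axy nonzero by blast
next
  assume "\<exists>x y z. x \<noteq> 0 \<and> y \<noteq> 0 \<and> z \<noteq> 0 \<and> A = outer sc ip x y \<and> B = outer sc ip y z"
  then obtain x y z where "A = outer sc ip x y" and "B = outer sc ip y z"
    by blast
  moreover have "cmod (ip y y) = (hn y)\<^sup>2"
    by (simp add: ip_self norm_power)
  ultimately show "cnorm sc ip c n (A \<circ> B) = cnorm sc ip c n A * cnorm sc ip c n B"
    using assms(2,3) by (simp add: cnorm_outer_comp cnorm_outer power2_eq_square mult_ac)
qed

end

theorem corollary2p7:
  fixes sc :: "complex \<Rightarrow> 'a::ab_group_add \<Rightarrow> 'a"
    and ip :: "'a \<Rightarrow> 'a \<Rightarrow> complex"
    and c :: "nat \<Rightarrow> real" and n :: nat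
  assumes H: "chilbert sc ip"
    and n1: "1 \<le> n"
    and dimH: "\<exists>B. finite B \<and> card B = n \<and> \<not> module.dependent sc B"
  shows
   "(desc_pos c n \<longrightarrow>
      ((\<forall>A B. bop sc ip A \<and> bop sc ip B \<longrightarrow>
          cnorm sc ip c n (A \<circ> B) \<le> cnorm sc ip c n A * cnorm sc ip c n B)
       \<longleftrightarrow> 1 \<le> c 1))
  \<and> (desc_pos c n \<longrightarrow>
      ((\<forall>A. bop sc ip A \<and> \<not> rank_lt sc A 1 \<and> rank_lt sc A 2 \<longrightarrow>
          cnorm sc ip c n A = sval sc ip 1 A)
       \<longleftrightarrow> c 1 = 1))
  \<and> (desc_pos c n \<and> 1 \<le> c 1 \<longrightarrow>
      ((\<exists>A B. bop sc ip A \<and> bop sc ip B \<and> A \<noteq> (\<lambda>_. 0) \<and> B \<noteq> (\<lambda>_. 0) \<and>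
          cnorm sc ip c n (A \<circ> B) = cnorm sc ip c n A * cnorm sc ip c n B)
       \<longleftrightarrow> c 1 = 1))
  \<and> (c 1 = 1 \<and> (\<forall>j\<in>{2..n}. c j = 0) \<longrightarrow>
      (\<forall>A B. bop sc ip A \<and> bop sc ip B \<and> A \<noteq> (\<lambda>_. 0) \<and> B \<noteq> (\<lambda>_. 0) \<longrightarrow>
          (cnorm sc ip c n (A \<circ> B) = cnorm sc ip c n A * cnorm sc ip c n B
           \<longleftrightarrow> sval sc ip 1 (A \<circ> B) = sval sc ip 1 A * sval sc ip 1 B)))
  \<and> (desc_pos c n \<and> 2 \<le> n \<and> c 1 = 1 \<and> 0 < c 2 \<longrightarrow>
      (\<forall>A B. bop sc ip A \<and> bop sc ip B \<and> A \<noteq> (\<lambda>_. 0) \<and> B \<noteq> (\<lambda>_. 0) \<longrightarrow>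
          (cnorm sc ip c n (A \<circ> B) = cnorm sc ip c n A * cnorm sc ip c n B
           \<longleftrightarrow> (\<exists>x y z. x \<noteq> 0 \<and> y \<noteq> 0 \<and> z \<noteq> 0 \<and>
                  A = outer sc ip x y \<and> B = outer sc ip y z))))"
proof -
  interpret hilbert_space sc ip
    by (rule hilbert_space.intro[OF H])
  obtain S where S: "finite S" "card S = n" "\<not> dependent S"
    using dimH by blast
  then obtain x where "x \<in> S"
    using n1 by fastforce
  then have x: "x \<noteq> 0"
    using S(3) dependent_zero by blast
  from cnorm_submultiplicative_iff[OF _ n1 x] cnorm_cross_norm_iff[OF n1 x]
    cnorm_comp_eq_exists_iff[OF _ n1 _ x] cnorm_eq_sval_1[OF n1] cnorm_comp_eq_iff_outer
  show ?thesis
    by auto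
qed

end
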